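(* Let $X=\{r_0,r_1,i\}$, $R=\{r_0,r_1\}$, $I=\{i\}$, $\mathcal A=\mathcal P(X)$, and define $\Pi_R:X\to R$ by $\Pi_R(r_0)=r_0$, $\Pi_R(r_1)=r_1$, $\Pi_R(i)=r_0$. Let $G=\{(x,x):x\in X\}$. Fix $\eta\in[0,1)$ with $\eta\neq0$. Let $m(i)=0$, $m(r_0)=m(r_1)=\frac1{1-\eta}$, $\mu(B)=\sum_{x\in B}m(x)$ for $B\subseteq X$, and let $\mu^{\otimes2}$ be the finitely additive set function on $\mathcal P(X\times X)$ determined by $\mu^{\otimes2}(A\times B)=\mu(A)\mu(B)$ (equivalently $\mu^{\otimes2}(S)=\sum_{(x,y)\in S}m(x)m(y)$). Then $(X,\mathcal P(X),\mu,\mu^{\otimes2},R,I,\Pi_R,G,E_0,\eta)$ with $E_0=\mu(R)+\mu(I)=\frac{2}{1-\eta}$ is an admissible structural model.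
   Context: For relations, $H\circ K=\{(x,z):\exists y\,(x,y)\in H,(y,z)\in K\}$. An admissible structural model is a tuple $(X,\mathcal A,\mu,\mu^{\otimes2},R,I,\Pi_R,G,E_0,\eta)$ with $X$ nonempty, $\mathcal A$ an algebra on $X$, $\mu:\mathcal A\to[0,\infty)$ finitely additive, $\mu^{\otimes2}$ finitely additive on the product algebra with $\mu^{\otimes2}(B_1\times B_2)=\mu(B_1)\mu(B_2)$, $R,I\in\mathcal A$ disjoint, $\Pi_R:X\to R$, $G$ in the product algebra, $E_0>0$, $\eta\in[0,1]$, satisfying: Axiom I: $\Pi_R\circ\Pi_R=\Pi_R$, $\Pi_R|_R=\mathrm{id}_R$, $\Pi_R^{-1}(B)\in\mathcal A$ for measurable $B\subseteq R$; Axiom II: $G$ reflexive, symmetric, $G\circ G=G$; Axiom III: $\mu(R)+\mu(I)=E_0$, $\mu(\Pi_R^{-1}(B))=\mu(B)$ for measurable $B\subseteq R$, and for all $B\in\mathcal A$, $\mu^{\otimes2}((B\times X)\cap G)=\mu(B)+\eta\,\mu^{\otimes2}((\Pi_R^{-1}(B)\times X)\cap G)$. *)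

theory Defs
  imports "HOL-Analysis.Analysis"
begin

definition prod_alg :: "'a set \<Rightarrow> 'a set set \<Rightarrow> ('a \<times> 'a) set set" where
  "prod_alg X A = \<Inter> {M. algebra (X \<times> X) M \<and> {B1 \<times> B2 | B1 B2. B1 \<in> A \<and> B2 \<in> A} \<subseteq> M}"

definition fin_add :: "'b set set \<Rightarrow> ('b set \<Rightarrow> real) \<Rightarrow> bool" where
  "fin_add M f \<longleftrightarrow> (\<forall>B\<in>M. 0 \<le> f B) \<and> f {} = 0 \<and>
     (\<forall>B\<in>M. \<forall>C\<in>M. B \<inter> C = {} \<longrightarrow> f (B \<union> C) = f B + f C)"

definition admissible_structural_model ::
  "'a set \<Rightarrow> 'a set set \<Rightarrow> ('a set \<Rightarrow> real) \<Rightarrow> (('a \<times> 'a) set \<Rightarrow> real) \<Rightarrow>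
   'a set \<Rightarrow> 'a set \<Rightarrow> ('a \<Rightarrow> 'a) \<Rightarrow> ('a \<times> 'a) set \<Rightarrow> real \<Rightarrow> real \<Rightarrow> bool" where
  "admissible_structural_model X A \<mu> \<mu>2 R I PR G E0 \<eta> \<longleftrightarrow>
     X \<noteq> {} \<and> algebra X A \<and> fin_add A \<mu> \<and> fin_add (prod_alg X A) \<mu>2 \<and>
     (\<forall>B1\<in>A. \<forall>B2\<in>A. \<mu>2 (B1 \<times> B2) = \<mu> B1 * \<mu> B2) \<and>
     R \<in> A \<and> I \<in> A \<and> R \<inter> I = {} \<and>
     (\<forall>x\<in>X. PR x \<in> R) \<and>
     G \<in> prod_alg X A \<and> E0 > 0 \<and> 0 \<le> \<eta> \<and> \<eta> \<le> 1 \<and>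
     (\<forall>x\<in>X. PR (PR x) = PR x) \<and> (\<forall>x\<in>R. PR x = x) \<and>
     (\<forall>B\<in>A. B \<subseteq> R \<longrightarrow> {x\<in>X. PR x \<in> B} \<in> A) \<and>
     (\<forall>x\<in>X. (x, x) \<in> G) \<and> (\<forall>x y. (x, y) \<in> G \<longrightarrow> (y, x) \<in> G) \<and> G O G = G \<and>
     \<mu> R + \<mu> I = E0 \<and>
     (\<forall>B\<in>A. B \<subseteq> R \<longrightarrow> \<mu> {x\<in>X. PR x \<in> B} = \<mu> B) \<and>
     (\<forall>B\<in>A. \<mu>2 ((B \<times> X) \<inter> G) = \<mu> B + \<eta> * \<mu>2 (({x\<in>X. PR x \<in> B} \<times> X) \<inter> G))"

datatype pt = r0 | r1 | i0

definition X3 :: "pt set" where "X3 = {r0, r1, i0}"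

fun Pi3 :: "pt \<Rightarrow> pt" where
  "Pi3 r0 = r0" | "Pi3 r1 = r1" | "Pi3 i0 = r0"

definition m3 :: "real \<Rightarrow> pt \<Rightarrow> real" where
  "m3 \<eta> x = (if x = i0 then 0 else 1 / (1 - \<eta>))"

definition mu3 :: "real \<Rightarrow> pt set \<Rightarrow> real" where
  "mu3 \<eta> B = (\<Sum>x\<in>B. m3 \<eta> x)"

definition mu3sq :: "real \<Rightarrow> (pt \<times> pt) set \<Rightarrow> real" where
  "mu3sq \<eta> S = (\<Sum>p\<in>S. m3 \<eta> (fst p) * m3 \<eta> (snd p))"

end

theory Submission
  imports Defs
begin

text \<open>With G the diagonal, both sides of the balance equation of Axiom III are sums over B:
  the left one of m(x)^2, the right one of m(x) + eta m(x)^2, because Pi_R only moves the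
  point i, which carries no mass. So the axiom reduces to the pointwise identity
  m^2 = m + eta m^2, which is exactly what the choice m = 1/(1 - eta) on R achieves.\<close>

lemma finite_pt_set [simp]: "finite (A :: pt set)"
proof (rule finite_subset)
  show "A \<subseteq> {r0, r1, i0}"
    using pt.exhaust by blast
qed simp

lemma X3_eq_UNIV: "X3 = UNIV"
  unfolding X3_def using pt.exhaust by blast

lemma fin_add_sum:
  fixes w :: "'a \<Rightarrow> real"
  assumes "finite (UNIV :: 'a set)" "\<And>x. 0 \<le> w x"
  shows "fin_add M (sum w)"
  unfolding fin_add_def
  by (auto intro: sum_nonneg assms(2) sum.union_disjoint rev_finite_subset[OF assms(1)])

lemma sum_product_density:
  fixes f :: "'a \<Rightarrow> 'b::comm_semiring_1"
  assumes "finite A" "finite B"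
  shows "(\<Sum>p\<in>A \<times> B. f (fst p) * f (snd p)) = sum f A * sum f B"
  using assms by (simp add: sum_product sum.cartesian_product case_prod_beta)

lemma sum_Times_Id_on:
  "(\<Sum>p\<in>(B \<times> X) \<inter> Id_on X. g (fst p) (snd p)) = (\<Sum>x\<in>B \<inter> X. g x x)"
proof -
  have "(B \<times> X) \<inter> Id_on X = (\<lambda>x. (x, x)) ` (B \<inter> X)"
    by auto
  then show ?thesis
    by (simp add: sum.reindex inj_on_def)
qed

lemma Id_on_in_prod_alg:
  assumes "finite X"
  shows "Id_on X \<in> prod_alg X (Pow X)"
  unfolding prod_alg_def
proof (intro InterI, clarify)
  fix M
  assume alg: "algebra (X \<times> X) M"
    and rect: "{B1 \<times> B2 |B1 B2. B1 \<in> Pow X \<and> B2 \<in> Pow X} \<subseteq> M"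
  interpret algebra "X \<times> X" M by (rule alg)
  have "{x} \<times> {x} \<in> M" if "x \<in> X" for x
    using that by (intro subsetD[OF rect]) auto
  then have "(\<Union>x\<in>X. {x} \<times> {x}) \<in> M"
    using assms by blast
  then show "Id_on X \<in> M"
    by (simp add: Id_on_def)
qed

text \<open>On R, P x lies in B exactly when x does; off R the weight vanishes.\<close>

lemma sum_preimage_retraction:
  assumes "finite X" "R \<subseteq> X" "B \<subseteq> X"
    and "\<And>x. x \<in> R \<Longrightarrow> P x = x"
    and "\<And>x. x \<in> X - R \<Longrightarrow> f x = 0"
  shows "(\<Sum>x\<in>{x\<in>X. P x \<in> B}. f x) = sum f B"
proof -
  have "(\<Sum>x\<in>{x\<in>X. P x \<in> B}. f x) = sum f ({x\<in>X. P x \<in> B} \<inter> R)"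
    using assms by (intro sum.mono_neutral_right) auto
  also have "{x\<in>X. P x \<in> B} \<inter> R = B \<inter> R"
    using assms by auto
  also have "sum f (B \<inter> R) = sum f B"
    using assms by (intro sum.mono_neutral_left) (auto simp: finite_subset)
  finally show ?thesis .
qed

lemma diagonal_X3_eq_Id_on: "{(x, x) | x. x \<in> X3} = Id_on X3"
  by auto

lemma m3_vanishes_off_R: "x \<notin> {r0, r1} \<Longrightarrow> m3 \<eta> x = 0"
  by (cases x) (auto simp: m3_def)

lemma m3_nonneg: "\<eta> < 1 \<Longrightarrow> 0 \<le> m3 \<eta> x"
  by (simp add: m3_def)

lemma m3_square_balance:
  assumes "\<eta> \<noteq> 1"
  shows "m3 \<eta> x ^ 2 = m3 \<eta> x + \<eta> * m3 \<eta> x ^ 2"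
proof -
  have "1 - \<eta> \<noteq> 0"
    using assms by simp
  then show ?thesis
    by (simp add: m3_def power2_eq_square divide_simps)
qed

lemma Pi3_range: "Pi3 x = r0 \<or> Pi3 x = r1"
  by (cases x) auto

lemma Pi3_retraction: "Pi3 (Pi3 x) = Pi3 x" "x \<in> {r0, r1} \<Longrightarrow> Pi3 x = x"
  by (cases x; auto)+

lemma mu3_preimage_Pi3: "mu3 \<eta> {x\<in>X3. Pi3 x \<in> B} = mu3 \<eta> B"
  unfolding mu3_def
  by (rule sum_preimage_retraction[where R = "{r0, r1}"])
    (auto simp: X3_eq_UNIV Pi3_retraction m3_vanishes_off_R)

lemma mu3sq_diagonal:
  "mu3sq \<eta> ((B \<times> X3) \<inter> Id_on X3) = (\<Sum>x\<in>B. m3 \<eta> x ^ 2)"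
  unfolding mu3sq_def sum_Times_Id_on[where g = "\<lambda>x y. m3 \<eta> x * m3 \<eta> y"]
  by (simp add: X3_eq_UNIV power2_eq_square)

lemma mu3sq_diagonal_balance:
  assumes "\<eta> \<noteq> 1"
  shows "mu3 \<eta> B + \<eta> * mu3sq \<eta> (({x\<in>X3. Pi3 x \<in> B} \<times> X3) \<inter> Id_on X3) =
           mu3sq \<eta> ((B \<times> X3) \<inter> Id_on X3)"
proof -
  have "(\<Sum>x\<in>{x\<in>X3. Pi3 x \<in> B}. m3 \<eta> x ^ 2) = (\<Sum>x\<in>B. m3 \<eta> x ^ 2)"
    by (rule sum_preimage_retraction[where R = "{r0, r1}"])
      (auto simp: X3_eq_UNIV Pi3_retraction m3_vanishes_off_R)
  moreover have "mu3 \<eta> B + \<eta> * (\<Sum>x\<in>B. m3 \<eta> x ^ 2) = (\<Sum>x\<in>B. m3 \<eta> x ^ 2)"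
    unfolding mu3_def sum_distrib_left sum.distrib[symmetric]
    by (rule sum.cong[OF refl]) (rule m3_square_balance[OF assms, symmetric])
  ultimately show ?thesis
    unfolding mu3sq_diagonal by simp
qed

theorem theorem5p2:
  fixes \<eta> :: real
  assumes "0 \<le> \<eta>" and "\<eta> < 1" and "\<eta> \<noteq> 0"
  shows "admissible_structural_model X3 (Pow X3) (mu3 \<eta>) (mu3sq \<eta>) {r0, r1} {i0} Pi3
           {(x, x) | x. x \<in> X3} (2 / (1 - \<eta>)) \<eta>"
proof -
  have "fin_add M (mu3 \<eta>)" for M
    using assms(2) unfolding mu3_def[abs_def] by (auto intro!: fin_add_sum m3_nonneg)
  moreover have "fin_add M (mu3sq \<eta>)" for M
    using assms(2) unfolding mu3sq_def[abs_def]
    by (auto intro!: fin_add_sum finite_Prod_UNIV mult_nonneg_nonneg m3_nonneg)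
  moreover have "mu3sq \<eta> (B1 \<times> B2) = mu3 \<eta> B1 * mu3 \<eta> B2" for B1 B2
    unfolding mu3sq_def mu3_def by (simp add: sum_product_density)
  moreover have "mu3 \<eta> {r0, r1} + mu3 \<eta> {i0} = 2 / (1 - \<eta>)"
    by (simp add: mu3_def m3_def)
  moreover have "Id_on X3 \<in> prod_alg X3 (Pow X3)"
    by (simp add: Id_on_in_prod_alg)
  moreover have "X3 \<noteq> {}" "{r0, r1} \<subseteq> X3" "{i0} \<subseteq> X3"
    by (simp_all add: X3_def)
  ultimately show ?thesis
    using assms(1,2)
    unfolding admissible_structural_model_def diagonal_X3_eq_Id_on
    by (intro conjI)
      (auto simp: algebra_Pow Pi3_retraction Pi3_range mu3_preimage_Pi3 mu3sq_diagonal_balance)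
qed

end
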